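(* Let $\beta^*\in\mathbb{R}^p$ with support $S$ and $s=|S|$. Let $\ell_0(\beta)=\frac{1}{2t_0}\sum_{j=1}^{t_0}(y_{0j}-x_{0j}^\top\beta)^2$, $\ell_j(\beta)=\frac12(y_j-x_j^\top\beta)^2$ for $j\ge1$, positive weights $w_{t,j}$ with $W_t=\sum_{j=1}^t w_{t,j}$, and $$L_t(\beta;\tilde\beta)=\ell_0(\beta)-\nabla\ell_0(\tilde\beta)^\top\beta+\Big\langle \sum_{j=1}^t\frac{w_{t,j}}{W_t}\nabla\ell_j(\tilde\beta),\beta\Big\rangle .$$ Suppose $\ell_0$ satisfies the RSC condition with parameter $\kappa>0$. Let $\hat\beta_{t-1}\in\mathbb{R}^p$, $\lambda_t>0$ with $\lambda_t\ge2\|\nabla L_t(\beta^*;\hat\beta_{t-1})\|_\infty$, and let $\hat\beta_t$ be a minimizer over $\mathbb{R}^p$ of $\beta\mapsto L_t(\beta;\hat\beta_{t-1})+\lambda_t\|\beta\|_1$. Then $$\|\hat\beta_t-\beta^*\|_1\le\frac{16s}{\kappa}\big(\lambda_t+\|\nabla L_t(\beta^*;\hat\beta_{t-1})\|_\infty\big)\le\frac{24s}{\kappa}\lambda_t$$ and $$\|\hat\beta_t-\beta^*\|_2^2\le\frac{\lambda_t+\|\nabla L_t(\beta^*;\hat\beta_{t-1})\|_\infty}{\kappa}\,\|\hat\beta_t-\beta^*\|_1 .$$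
   Context: A function $f:\mathbb{R}^p\to\mathbb{R}$ satisfies the RSC condition with parameter $\kappa>0$ if for every $\Delta\in\mathcal{C}_S=\{\xi\in\mathbb{R}^p:\|\xi_{S^c}\|_1\le3\|\xi_S\|_1\}$ one has $f(\beta^*+\Delta)-f(\beta^* )-\Delta^\top\nabla f(\beta^* )\ge\kappa\|\Delta\|_2^2$; here $\xi_{\mathcal{A}}$ keeps the entries of $\xi$ indexed by $\mathcal{A}$ and zeroes the others. Gradients of $L_t$ are taken with respect to its first argument. The data points are arbitrary elements of $\mathbb{R}^p\times\mathbb{R}$. *)

theory Defs
  imports "HOL-Analysis.Analysis"
begin

definition l1norm :: "real^'p \<Rightarrow> real" where
  "l1norm v = (\<Sum>i\<in>UNIV. \<bar>v $ i\<bar>)"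

definition linfnorm :: "real^'p \<Rightarrow> real" where
  "linfnorm v = Max {\<bar>v $ i\<bar> | i. True}"

definition supp :: "real^'p \<Rightarrow> 'p set" where
  "supp v = {i. v $ i \<noteq> 0}"

definition restr :: "real^'p \<Rightarrow> 'p set \<Rightarrow> real^'p" where
  "restr v A = (\<chi> i. if i \<in> A then v $ i else 0)"

definition cone :: "'p set \<Rightarrow> (real^'p) set" where
  "cone S = {\<xi>. l1norm (restr \<xi> (- S)) \<le> 3 * l1norm (restr \<xi> S)}"

definition grad :: "(real^'p \<Rightarrow> real) \<Rightarrow> real^'p \<Rightarrow> real^'p" where
  "grad f b = (THE g. (f has_derivative (\<lambda>h. g \<bullet> h)) (at b))"

definition RSC :: "(real^'p \<Rightarrow> real) \<Rightarrow> real^'p \<Rightarrow> real \<Rightarrow> bool" where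
  "RSC f bstar \<kappa> \<longleftrightarrow> \<kappa> > 0 \<and>
     (\<forall>\<Delta>\<in>cone (supp bstar).
        f (bstar + \<Delta>) - f bstar - \<Delta> \<bullet> grad f bstar \<ge> \<kappa> * (norm \<Delta>)\<^sup>2)"

definition ell0 :: "nat \<Rightarrow> (nat \<Rightarrow> real^'p) \<Rightarrow> (nat \<Rightarrow> real) \<Rightarrow> real^'p \<Rightarrow> real" where
  "ell0 t0 x0 y0 \<beta> = (1 / (2 * real t0)) * (\<Sum>j=1..t0. (y0 j - x0 j \<bullet> \<beta>)\<^sup>2)"

definition ellj :: "real^'p \<Rightarrow> real \<Rightarrow> real^'p \<Rightarrow> real" where
  "ellj xj yj \<beta> = (1/2) * (yj - xj \<bullet> \<beta>)\<^sup>2"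

definition Lt :: "nat \<Rightarrow> (nat \<Rightarrow> real^'p) \<Rightarrow> (nat \<Rightarrow> real) \<Rightarrow> nat \<Rightarrow> (nat \<Rightarrow> real)
    \<Rightarrow> (nat \<Rightarrow> real^'p) \<Rightarrow> (nat \<Rightarrow> real) \<Rightarrow> real^'p \<Rightarrow> real^'p \<Rightarrow> real" where
  "Lt t0 x0 y0 t w x y \<beta> \<beta>t =
     ell0 t0 x0 y0 \<beta> - grad (ell0 t0 x0 y0) \<beta>t \<bullet> \<beta>
     + (\<Sum>j=1..t. (w j / (\<Sum>k=1..t. w k)) *\<^sub>R grad (ellj (x j) (y j)) \<beta>t) \<bullet> \<beta>"

end

theory Submission
  imports Defs
begin

text \<open>Up to a linear term, \<open>L\<^sub>t(\<cdot>; \<beta>\<^sub>t\<^sub>-\<^sub>1)\<close> is the convex quadratic \<open>\<ell>\<^sub>0\<close>, so its Bregman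
  divergence at \<open>\<beta>\<^sup>*\<close> is that of \<open>\<ell>\<^sub>0\<close>: nonnegative everywhere and at least
  \<open>\<kappa>\<parallel>\<Delta>\<parallel>\<^sub>2\<^sup>2\<close> on the cone.  The usual Lasso argument then applies: comparing the objective at
  \<open>\<beta>\<^sub>t\<close> and at \<open>\<beta>\<^sup>*\<close> and using \<open>\<lambda>\<^sub>t \<ge> 2\<parallel>\<nabla>L\<^sub>t(\<beta>\<^sup>*)\<parallel>\<^sub>\<infinity>\<close> puts the error \<open>\<Delta>\<close> in the
  cone, bounds the divergence by \<open>(\<lambda>\<^sub>t + \<parallel>\<nabla>L\<^sub>t(\<beta>\<^sup>*)\<parallel>\<^sub>\<infinity>) \<parallel>\<Delta>\<parallel>\<^sub>1\<close>, and on the cone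
  \<open>\<parallel>\<Delta>\<parallel>\<^sub>1 \<le> 4\<parallel>\<Delta>\<^sub>S\<parallel>\<^sub>1 \<le> 4\<surd>s \<parallel>\<Delta>\<parallel>\<^sub>2\<close>.\<close>

definition bregman :: "(real^'p \<Rightarrow> real) \<Rightarrow> real^'p \<Rightarrow> real^'p \<Rightarrow> real" where
  "bregman f b d = f (b + d) - f b - d \<bullet> grad f b"

lemma RSC_iff_bregman:
  "RSC f b \<kappa> \<longleftrightarrow> \<kappa> > 0 \<and> (\<forall>\<Delta>\<in>cone (supp b). \<kappa> * (norm \<Delta>)\<^sup>2 \<le> bregman f b \<Delta>)"
  by (simp add: RSC_def bregman_def)

lemma grad_eqI:
  assumes "(f has_derivative (\<lambda>h. g \<bullet> h)) (at b)"
  shows "grad f b = g"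
  unfolding grad_def
proof (rule the_equality)
  fix g' assume "(f has_derivative (\<lambda>h. g' \<bullet> h)) (at b)"
  then have "(\<lambda>h. g' \<bullet> h) = (\<lambda>h. g \<bullet> h)"
    using has_derivative_unique assms by blast
  then have "(g' - g) \<bullet> (g' - g) = 0"
    by (metis inner_diff_left right_minus_eq)
  then show "g' = g" by simp
qed (fact assms)

lemma grad_add_linear:
  assumes "(f has_derivative (\<lambda>h. g \<bullet> h)) (at b)"
  shows "grad (\<lambda>x. f x + c \<bullet> x) b = g + c"
proof (rule grad_eqI)
  show "((\<lambda>x. f x + c \<bullet> x) has_derivative (\<lambda>h. (g + c) \<bullet> h)) (at b)"
    using has_derivative_add[OF assms bounded_linear.has_derivative[OF
          bounded_linear_inner_right has_derivative_ident]]
    by (simp add: inner_add_left)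
qed

lemma bregman_add_linear:
  assumes "(f has_derivative (\<lambda>h. g \<bullet> h)) (at b)"
  shows "bregman (\<lambda>x. f x + c \<bullet> x) b d = bregman f b d"
  unfolding bregman_def grad_add_linear[OF assms] grad_eqI[OF assms]
  by (simp add: inner_add_left inner_add_right inner_commute[of c d])

lemma RSC_add_linear:
  assumes "(f has_derivative (\<lambda>h. g \<bullet> h)) (at b)"
  shows "RSC (\<lambda>x. f x + c \<bullet> x) b \<kappa> \<longleftrightarrow> RSC f b \<kappa>"
  using bregman_add_linear[OF assms] by (simp add: RSC_iff_bregman)


definition ell0_grad :: "nat \<Rightarrow> (nat \<Rightarrow> real^'p) \<Rightarrow> (nat \<Rightarrow> real) \<Rightarrow> real^'p \<Rightarrow> real^'p" where
  "ell0_grad t0 x0 y0 b = (\<Sum>j=1..t0. ((x0 j \<bullet> b - y0 j) / real t0) *\<^sub>R x0 j)"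

lemma has_derivative_ell0:
  "(ell0 t0 x0 y0 has_derivative (\<lambda>h. ell0_grad t0 x0 y0 b \<bullet> h)) (at b)"
proof -
  have "(ell0 t0 x0 y0 has_derivative (\<lambda>h. (1 / (2 * real t0)) *
          (\<Sum>j=1..t0. 2 * (y0 j - x0 j \<bullet> b) * (- (x0 j \<bullet> h))))) (at b)"
    unfolding ell0_def[abs_def]
    by (rule derivative_eq_intros
          bounded_linear.has_derivative[OF bounded_linear_inner_right] has_derivative_ident refl)+
       (auto simp: fun_eq_iff algebra_simps intro!: sum.cong)
  moreover have "(1 / (2 * real t0)) * (\<Sum>j=1..t0. 2 * (y0 j - x0 j \<bullet> b) * (- (x0 j \<bullet> h)))
      = ell0_grad t0 x0 y0 b \<bullet> h" for h
    unfolding ell0_grad_def inner_sum_left sum_distrib_left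
    by (rule sum.cong) (auto simp: field_simps)
  ultimately show ?thesis by simp
qed

lemma grad_ell0: "grad (ell0 t0 x0 y0) b = ell0_grad t0 x0 y0 b"
  by (rule grad_eqI[OF has_derivative_ell0])

lemma bregman_ell0:
  "bregman (ell0 t0 x0 y0) b d = (1 / (2 * real t0)) * (\<Sum>j=1..t0. (x0 j \<bullet> d)\<^sup>2)"
proof -
  have "bregman (ell0 t0 x0 y0) b d =
     (\<Sum>j=1..t0. (1 / (2 * real t0)) * (y0 j - x0 j \<bullet> (b + d))\<^sup>2
        - (1 / (2 * real t0)) * (y0 j - x0 j \<bullet> b)\<^sup>2
        - ((x0 j \<bullet> b - y0 j) / real t0) * (d \<bullet> x0 j))"
    by (simp add: bregman_def grad_ell0 ell0_def ell0_grad_def inner_sum_right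
        sum_distrib_left sum_subtractf)
  also have "\<dots> = (\<Sum>j=1..t0. (1 / (2 * real t0)) * (x0 j \<bullet> d)\<^sup>2)"
    by (rule sum.cong) (auto simp: field_simps power2_eq_square inner_add_right inner_commute)
  finally show ?thesis by (simp add: sum_distrib_left)
qed

lemma bregman_ell0_nonneg: "bregman (ell0 t0 x0 y0) b d \<ge> 0"
  unfolding bregman_ell0 by (intro mult_nonneg_nonneg sum_nonneg) auto

lemma Lt_eq_ell0_plus_linear:
  obtains c where "(\<lambda>b. Lt t0 x0 y0 t w x y b bt) = (\<lambda>b. ell0 t0 x0 y0 b + c \<bullet> b)"
proof
  show "(\<lambda>b. Lt t0 x0 y0 t w x y b bt) = (\<lambda>b. ell0 t0 x0 y0 b +
      ((\<Sum>j=1..t. (w j / (\<Sum>k=1..t. w k)) *\<^sub>R grad (ellj (x j) (y j)) bt)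
        - grad (ell0 t0 x0 y0) bt) \<bullet> b)"
    by (simp add: fun_eq_iff Lt_def inner_diff_left)
qed


lemma l1norm_restr: "l1norm (restr v A) = (\<Sum>i\<in>A. \<bar>v $ i\<bar>)"
  unfolding l1norm_def restr_def by (simp add: sum.If_cases if_distrib)

lemma l1norm_restr_nonneg: "l1norm (restr v A) \<ge> 0"
  unfolding l1norm_restr by (simp add: sum_nonneg)

lemma l1norm_split: "l1norm v = l1norm (restr v A) + l1norm (restr v (- A))"
proof -
  have "l1norm v = (\<Sum>i\<in>A. \<bar>v $ i\<bar>) + (\<Sum>i\<in>- A. \<bar>v $ i\<bar>)"
    unfolding l1norm_def using sum.subset_diff[of A UNIV "\<lambda>i. \<bar>v $ i\<bar>"]
    by (simp add: Compl_eq_Diff_UNIV add.commute)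
  then show ?thesis by (simp only: l1norm_restr)
qed

lemma l1norm_diff_le_supp:
  "l1norm b - l1norm b' \<le> l1norm (restr (b' - b) (supp b)) - l1norm (restr (b' - b) (- supp b))"
proof -
  have "l1norm b - l1norm b' = (\<Sum>i\<in>UNIV. \<bar>b $ i\<bar> - \<bar>b' $ i\<bar>)"
    unfolding l1norm_def by (simp add: sum_subtractf)
  also have "\<dots> \<le> (\<Sum>i\<in>UNIV. (if i \<in> supp b then \<bar>(b' - b) $ i\<bar> else 0)
                            - (if i \<in> - supp b then \<bar>(b' - b) $ i\<bar> else 0))"
    by (rule sum_mono) (auto simp: supp_def)
  finally show ?thesis
    unfolding l1norm_restr by (simp add: sum_subtractf sum.If_cases Compl_eq)
qed

lemma abs_le_linfnorm: "\<bar>g $ i\<bar> \<le> linfnorm g"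
proof -
  have "{\<bar>g $ i\<bar> | i. True} = (\<lambda>i. \<bar>g $ i\<bar>) ` UNIV" by auto
  then show ?thesis unfolding linfnorm_def by (intro Max_ge) auto
qed

lemma linfnorm_nonneg: "linfnorm g \<ge> 0"
  using abs_le_linfnorm abs_ge_zero order_trans by metis

lemma abs_inner_le_linfnorm_l1norm: "\<bar>g \<bullet> d\<bar> \<le> linfnorm g * l1norm d"
proof -
  have "\<bar>g \<bullet> d\<bar> \<le> (\<Sum>i\<in>UNIV. \<bar>g $ i * d $ i\<bar>)"
    unfolding inner_vec_def by simp
  also have "\<dots> \<le> (\<Sum>i\<in>UNIV. linfnorm g * \<bar>d $ i\<bar>)"
    by (rule sum_mono) (simp add: abs_mult mult_right_mono abs_le_linfnorm)
  finally show ?thesis unfolding l1norm_def by (simp add: sum_distrib_left)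
qed

lemma l1norm_restr_squared_le: "(l1norm (restr d A))\<^sup>2 \<le> real (card A) * (norm d)\<^sup>2"
proof -
  have "(l1norm (restr d A))\<^sup>2 \<le> (\<Sum>i\<in>A. (\<bar>d $ i\<bar>)\<^sup>2) * card A"
    unfolding l1norm_restr by (rule sum_squared_le_sum_of_squares)
  also have "\<dots> \<le> (\<Sum>i\<in>UNIV. (d $ i)\<^sup>2) * card A"
    by (rule mult_right_mono) (auto intro!: sum_mono2)
  also have "(\<Sum>i\<in>UNIV. (d $ i)\<^sup>2) = (norm d)\<^sup>2"
    unfolding power2_norm_eq_inner inner_vec_def by (simp add: power2_eq_square)
  finally show ?thesis by (simp add: mult.commute)
qed

lemma cone_l1norm_le_4_restr: "d \<in> cone S \<Longrightarrow> l1norm d \<le> 4 * l1norm (restr d S)"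
  using l1norm_split[of d S] by (simp add: cone_def)

lemma cone_l1norm_bound:
  assumes "d \<in> cone S" and "\<kappa> > 0" and "M \<ge> 0"
    and quad: "\<kappa> * (norm d)\<^sup>2 \<le> M * l1norm d"
  shows "l1norm d \<le> 16 * real (card S) / \<kappa> * M"
proof -
  define A where "A = l1norm (restr d S)"
  have A_nonneg: "A \<ge> 0" unfolding A_def by (rule l1norm_restr_nonneg)
  have d_le_A: "l1norm d \<le> 4 * A"
    unfolding A_def using assms(1) by (rule cone_l1norm_le_4_restr)
  have "\<kappa> * (norm d)\<^sup>2 \<le> M * (4 * A)"
    using quad mult_left_mono[OF d_le_A \<open>M \<ge> 0\<close>] by linarith
  then have "\<kappa> * (real (card S) * (norm d)\<^sup>2) \<le> real (card S) * (M * (4 * A))"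
    by (metis mult.left_commute mult_left_mono of_nat_0_le_iff)
  moreover have "\<kappa> * A\<^sup>2 \<le> \<kappa> * (real (card S) * (norm d)\<^sup>2)"
    unfolding A_def using l1norm_restr_squared_le \<open>\<kappa> > 0\<close> by (simp add: mult_left_mono)
  ultimately have "A * (\<kappa> * A) \<le> A * (4 * real (card S) * M)"
    by (simp add: power2_eq_square algebra_simps)
  then have "\<kappa> * A \<le> 4 * real (card S) * M"
    using A_nonneg \<open>M \<ge> 0\<close> by (cases "A = 0") (auto simp: mult_le_cancel_left_pos)
  moreover have "\<kappa> * l1norm d \<le> \<kappa> * (4 * A)"
    using d_le_A \<open>\<kappa> > 0\<close> by simp
  ultimately have "\<kappa> * l1norm d \<le> 16 * real (card S) * M"
    by linarith
  then show ?thesis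
    using \<open>\<kappa> > 0\<close> by (simp add: field_simps)
qed


lemma lasso_basic_inequality:
  assumes "lam \<ge> 0"
    and minim: "f bhat + lam * l1norm bhat \<le> f bstar + lam * l1norm bstar"
  defines "d \<equiv> bhat - bstar" and "S \<equiv> supp bstar"
  shows "bregman f bstar d \<le> lam * (l1norm (restr d S) - l1norm (restr d (- S)))
                              + linfnorm (grad f bstar) * l1norm d"
proof -
  have "lam * (l1norm bstar - l1norm bhat) \<le> lam * (l1norm (restr d S) - l1norm (restr d (- S)))"
    unfolding d_def S_def by (intro mult_left_mono l1norm_diff_le_supp \<open>lam \<ge> 0\<close>)
  moreover have "- (d \<bullet> grad f bstar) \<le> linfnorm (grad f bstar) * l1norm d"
    using abs_inner_le_linfnorm_l1norm[of "grad f bstar" d] by (simp add: inner_commute)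
  ultimately show ?thesis
    using minim by (simp add: bregman_def d_def algebra_simps)
qed

lemma lasso_error_bounds:
  assumes convex: "\<And>d. bregman f bstar d \<ge> 0"
    and rsc: "RSC f bstar \<kappa>"
    and lam_pos: "lam > 0"
    and lam_ge: "lam \<ge> 2 * linfnorm (grad f bstar)"
    and minim: "f bhat + lam * l1norm bhat \<le> f bstar + lam * l1norm bstar"
  shows "l1norm (bhat - bstar) \<le> 16 * real (card (supp bstar)) / \<kappa>
            * (lam + linfnorm (grad f bstar))
       \<and> 16 * real (card (supp bstar)) / \<kappa> * (lam + linfnorm (grad f bstar))
          \<le> 24 * real (card (supp bstar)) / \<kappa> * lam
       \<and> (norm (bhat - bstar))\<^sup>2 \<le> (lam + linfnorm (grad f bstar)) / \<kappa> * l1norm (bhat - bstar)"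
proof -
  define d where "d = bhat - bstar"
  define G where "G = linfnorm (grad f bstar)"
  define A where "A = l1norm (restr d (supp bstar))"
  define B where "B = l1norm (restr d (- supp bstar))"
  have basic: "bregman f bstar d \<le> lam * (A - B) + G * (A + B)"
    using lasso_basic_inequality[OF less_imp_le[OF lam_pos] minim]
      l1norm_split[of d "supp bstar"]
    unfolding A_def B_def G_def d_def by simp
  have "0 \<le> G" "2 * G \<le> lam" "0 \<le> A" "0 \<le> B"
    using lam_ge linfnorm_nonneg l1norm_restr_nonneg unfolding G_def A_def B_def by auto
  text \<open>With \<open>2G \<le> \<lambda>\<close>, nonnegativity of the divergence forces \<open>(\<lambda> - G) B \<le> (\<lambda> + G) A\<close>.\<close>
  then have "lam * B \<le> 3 * lam * A"
    using basic convex[of d] mult_right_mono[of "2 * G" lam A] mult_right_mono[of "2 * G" lam B]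
    by (simp add: algebra_simps)
  then have in_cone: "d \<in> cone (supp bstar)"
    using lam_pos unfolding cone_def A_def B_def by simp
  have "0 \<le> lam * B"
    using lam_pos \<open>0 \<le> B\<close> by simp
  with basic have "bregman f bstar d \<le> (lam + G) * (A + B)"
    by (simp add: ring_distribs)
  then have upper: "bregman f bstar d \<le> (lam + G) * l1norm d"
    using l1norm_split[of d "supp bstar"] unfolding A_def B_def by simp
  have "\<kappa> > 0" and "\<kappa> * (norm d)\<^sup>2 \<le> bregman f bstar d"
    using rsc in_cone by (auto simp: RSC_iff_bregman)
  then have quad: "\<kappa> * (norm d)\<^sup>2 \<le> (lam + G) * l1norm d"
    using upper by linarith
  have "16 * real (card (supp bstar)) / \<kappa> * (lam + G)
          \<le> 16 * real (card (supp bstar)) / \<kappa> * (3 / 2 * lam)"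
    using \<open>2 * G \<le> lam\<close> \<open>\<kappa> > 0\<close> by (intro mult_left_mono) auto
  then show ?thesis
    using cone_l1norm_bound[OF in_cone \<open>\<kappa> > 0\<close> _ quad] quad \<open>\<kappa> > 0\<close> \<open>0 \<le> G\<close> lam_pos
    unfolding d_def G_def by (simp add: field_simps)
qed

theorem lemma2:
  fixes bstar bprev bhat :: "real^'p"
    and x0 x :: "nat \<Rightarrow> real^'p" and y0 y w :: "nat \<Rightarrow> real"
    and t0 t :: nat and \<kappa> lam :: real
  assumes t0_pos: "t0 \<ge> 1" and t_pos: "t \<ge> 1"
    and w_pos: "\<And>j. j \<in> {1..t} \<Longrightarrow> w j > 0"
    and rsc: "RSC (ell0 t0 x0 y0) bstar \<kappa>"
    and lam_pos: "lam > 0"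
    and lam_ge: "lam \<ge> 2 * linfnorm (grad (\<lambda>b. Lt t0 x0 y0 t w x y b bprev) bstar)"
    and minim: "\<And>b. Lt t0 x0 y0 t w x y bhat bprev + lam * l1norm bhat
                     \<le> Lt t0 x0 y0 t w x y b bprev + lam * l1norm b"
  shows "l1norm (bhat - bstar) \<le> 16 * real (card (supp bstar)) / \<kappa>
            * (lam + linfnorm (grad (\<lambda>b. Lt t0 x0 y0 t w x y b bprev) bstar))
       \<and> 16 * real (card (supp bstar)) / \<kappa>
            * (lam + linfnorm (grad (\<lambda>b. Lt t0 x0 y0 t w x y b bprev) bstar))
          \<le> 24 * real (card (supp bstar)) / \<kappa> * lam
       \<and> (norm (bhat - bstar))\<^sup>2 \<le>
          (lam + linfnorm (grad (\<lambda>b. Lt t0 x0 y0 t w x y b bprev) bstar)) / \<kappa>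
            * l1norm (bhat - bstar)"
proof -
  obtain c where L_eq: "(\<lambda>b. Lt t0 x0 y0 t w x y b bprev) = (\<lambda>b. ell0 t0 x0 y0 b + c \<bullet> b)"
    by (rule Lt_eq_ell0_plus_linear)
  have "bregman (\<lambda>b. Lt t0 x0 y0 t w x y b bprev) bstar d \<ge> 0" for d
    unfolding L_eq bregman_add_linear[OF has_derivative_ell0] by (rule bregman_ell0_nonneg)
  moreover have "RSC (\<lambda>b. Lt t0 x0 y0 t w x y b bprev) bstar \<kappa>"
    unfolding L_eq RSC_add_linear[OF has_derivative_ell0] by (rule rsc)
  ultimately show ?thesis
    using lasso_error_bounds[where f = "\<lambda>b. Lt t0 x0 y0 t w x y b bprev"] lam_pos lam_ge minim[of bstar]
    by blast
qed

end
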